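(* Let $m\ge1$, $n=2^m-1$ and $\iota,\kappa\in\dot F^m$. Every element $\bar c$ of the linear span $\langle R_\iota,R_\kappa\rangle$ of $R_\iota\cup R_\kappa$ satisfies $$c_\alpha+c_{\alpha+\iota}+c_{\alpha+\kappa}+c_{\alpha+\iota+\kappa}=0 \quad\text{for all } \alpha\in F^m\setminus\langle\iota,\kappa\rangle,$$ where $\langle\iota,\kappa\rangle$ is the linear span of $\iota,\kappa$ in $F^m$.
   Context: $F^m$ denotes the vector space of binary $m$-tuples over $GF(2)$, and $\dot F^m := F^m\setminus\{0^m\}$. The coordinates of words $\bar c\in F^n$ ($n=2^m-1$) are indexed by the elements of $\dot F^m$, $\bar c=\{c_\alpha\}_{\alpha\in\dot F^m}$. The Hamming code is $H:=\{\bar c\in F^n \mid \sum_{\alpha\in\dot F^m} c_\alpha\alpha = 0^m\}$. For $\iota\in\dot F^m$, $R_\iota := \{\bar c\in H \mid c_\alpha=c_{\alpha+\iota} \text{ for all } \alpha\in F^m\setminus\{0^m,\iota\}\}$; it is a linear subspace of $F^n$. *)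

theory Defs
  imports "HOL-Analysis.Analysis" "HOL-Library.Z2"
begin

text \<open>F^m is modelled as bit ^ 'm (m = CARD('m) >= 1). A word of F^n, n = 2^m - 1,
  indexed by the nonzero vectors, is a vector c :: bit ^ (bit ^ 'm) whose coordinate
  at 0 is 0 (that coordinate does not exist in F^n; the words form a subspace).\<close>

instance bit :: finite
proof
  have "(UNIV :: bit set) = {0, 1}" by (auto intro: bit_not_zero_iff[THEN iffD1])
  then show "finite (UNIV :: bit set)" by (metis finite.emptyI finite_insert)
qed

type_synonym 'm word = "bit ^ (bit ^ 'm)"

definition words :: "'m::finite word set" where
  "words = {c. c $ 0 = 0}"

definition hamming :: "'m::finite word set" where
  "hamming = {c \<in> words. (\<Sum>\<alpha>\<in>UNIV - {0}. (c $ \<alpha>) *s \<alpha>) = 0}"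

definition R :: "bit ^ 'm \<Rightarrow> 'm::finite word set" where
  "R \<iota> = {c \<in> hamming. \<forall>\<alpha>. \<alpha> \<noteq> 0 \<and> \<alpha> \<noteq> \<iota> \<longrightarrow> c $ \<alpha> = c $ (\<alpha> + \<iota>)}"

end

theory Submission
  imports Defs
begin

text \<open>Each generator of \<open>R \<iota>\<close> is constant on the cosets \<open>{\<beta>, \<beta> + \<iota>}\<close> away from \<open>{0, \<iota>}\<close>, so
  the four coordinates \<open>\<alpha>, \<alpha> + \<iota>, \<alpha> + \<kappa>, \<alpha> + \<iota> + \<kappa>\<close> pair up into two equal pairs and sum
  to zero in characteristic 2; the same holds for \<open>R \<kappa>\<close> by symmetry. For \<open>\<alpha>\<close> outside the span
  of \<open>\<iota>, \<kappa>\<close> none of these coordinates is \<open>0\<close>, \<open>\<iota>\<close> or \<open>\<kappa>\<close>. Since the sum is linear in the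
  word, it vanishes on the whole span of \<open>R \<iota> \<union> R \<kappa>\<close>.\<close>

lemma bit_add_self [simp]: "(x::bit) + x = 0"
  by (cases x) auto

lemma bit_vec_add_self [simp]: "(x::bit^'n) + x = 0"
  by (simp add: vec_eq_iff)

lemma bit_vec_add_eq_iff: "(a::bit^'n) + b = c \<longleftrightarrow> a = c + b"
proof
  assume "a + b = c"
  then show "a = c + b" by (auto simp: add.assoc)
next
  assume "a = c + b"
  then show "a + b = c" by (simp add: add.assoc)
qed

definition square_sum :: "bit ^ 'm \<Rightarrow> bit ^ 'm \<Rightarrow> bit ^ 'm \<Rightarrow> 'm::finite word \<Rightarrow> bit" where
  "square_sum \<iota> \<kappa> \<alpha> c = c $ \<alpha> + c $ (\<alpha> + \<iota>) + c $ (\<alpha> + \<kappa>) + c $ (\<alpha> + \<iota> + \<kappa>)"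

lemma square_sum_commute: "square_sum \<iota> \<kappa> = square_sum \<kappa> \<iota>"
  unfolding square_sum_def by (intro ext) (simp only: ac_simps)

lemma subspace_square_sum_eq_0:
  fixes \<iota> \<kappa> \<alpha> :: "bit ^ 'm::finite"
  shows "vec.subspace {c. square_sum \<iota> \<kappa> \<alpha> c = 0}"
proof (rule vec.subspaceI)
  fix x y :: "'m word"
  assume "x \<in> {c. square_sum \<iota> \<kappa> \<alpha> c = 0}" "y \<in> {c. square_sum \<iota> \<kappa> \<alpha> c = 0}"
  moreover have "square_sum \<iota> \<kappa> \<alpha> (x + y) = square_sum \<iota> \<kappa> \<alpha> x + square_sum \<iota> \<kappa> \<alpha> y"
    by (simp only: square_sum_def vector_add_component ac_simps)
  ultimately show "x + y \<in> {c. square_sum \<iota> \<kappa> \<alpha> c = 0}" by simp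
next
  fix r and x :: "'m word"
  assume "x \<in> {c. square_sum \<iota> \<kappa> \<alpha> c = 0}"
  moreover have "square_sum \<iota> \<kappa> \<alpha> (r *s x) = r * square_sum \<iota> \<kappa> \<alpha> x"
    by (simp only: square_sum_def vector_smult_component distrib_left)
  ultimately show "r *s x \<in> {c. square_sum \<iota> \<kappa> \<alpha> c = 0}" by simp
qed (simp add: square_sum_def)

lemma square_sum_R_eq_0:
  assumes "c \<in> R \<iota>" and "\<alpha> \<noteq> 0" "\<alpha> \<noteq> \<iota>" "\<alpha> + \<kappa> \<noteq> 0" "\<alpha> + \<kappa> \<noteq> \<iota>"
  shows "square_sum \<iota> \<kappa> \<alpha> c = 0"
proof -
  have pair: "c $ \<beta> = c $ (\<beta> + \<iota>)" if "\<beta> \<noteq> 0" "\<beta> \<noteq> \<iota>" for \<beta>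
    using assms(1) that by (auto simp: R_def)
  have "c $ (\<alpha> + \<iota> + \<kappa>) = c $ (\<alpha> + \<kappa>)"
    using pair[of "\<alpha> + \<kappa>"] assms(4,5) by (simp add: ac_simps)
  then show ?thesis
    using pair[of \<alpha>] assms(2,3) by (simp add: square_sum_def add.assoc)
qed

lemma not_in_span_pair_cases:
  fixes \<iota> \<kappa> \<alpha> :: "bit ^ 'm::finite"
  assumes "\<alpha> \<notin> vec.span {\<iota>, \<kappa>}"
  shows "\<alpha> \<noteq> 0" "\<alpha> \<noteq> \<iota>" "\<alpha> \<noteq> \<kappa>" "\<alpha> \<noteq> \<iota> + \<kappa>"
  using assms by (auto intro: vec.span_base vec.span_zero vec.span_add)

theorem lemma2:
  fixes \<iota> \<kappa> :: "bit ^ 'm::finite" and c :: "'m word" and \<alpha> :: "bit ^ 'm"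
  assumes "\<iota> \<noteq> 0" and "\<kappa> \<noteq> 0"
    and "c \<in> module.span (*s) (R \<iota> \<union> R \<kappa>)"
    and "\<alpha> \<notin> module.span (*s) {\<iota>, \<kappa>}"
  shows "c $ \<alpha> + c $ (\<alpha> + \<iota>) + c $ (\<alpha> + \<kappa>) + c $ (\<alpha> + \<iota> + \<kappa>) = 0"
proof -
  note \<alpha> = not_in_span_pair_cases[OF assms(4)]
  have "\<alpha> + \<kappa> \<noteq> 0" "\<alpha> + \<kappa> \<noteq> \<iota>" "\<alpha> + \<iota> \<noteq> 0" "\<alpha> + \<iota> \<noteq> \<kappa>"
    using \<alpha> by (auto simp: bit_vec_add_eq_iff add.commute)
  then have "square_sum \<iota> \<kappa> \<alpha> x = 0" if "x \<in> R \<iota> \<union> R \<kappa>" for x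
    using that \<alpha> square_sum_R_eq_0[of x \<iota> \<alpha> \<kappa>] square_sum_R_eq_0[of x \<kappa> \<alpha> \<iota>]
    by (auto simp: square_sum_commute)
  then have "square_sum \<iota> \<kappa> \<alpha> c = 0"
    using vec.span_induct[OF assms(3) subspace_square_sum_eq_0] by blast
  then show ?thesis
    by (simp add: square_sum_def)
qed

end
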